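(* Let $\mathbb{A}\colon\mathbb{R}^d\to\mathbb{R}^d$ be Lipschitz continuous and monotone, let $T>0$ and $X_0\in\mathbb{R}^d$. Then the system (Dual-Anchor ODE) \[ \dot X(t)=-Z(t)-\mathbb{A}(X(t)),\qquad \dot Z(t)=-\frac{1}{T-t}Z(t)-\frac{1}{T-t}\mathbb{A}(X(t)),\qquad t\in(0,T), \] with $X(0)=X_0$, $Z(0)=0$, has a unique solution $X\colon[0,T)\to\mathbb{R}^d$ (together with $Z$), the limit $X(T)=\lim_{t\to T^-}X(t)$ exists, and for every $X_\star\in\mathrm{Zer}\,\mathbb{A}$, \[ \|\mathbb{A}(X(T))\|^2\le\frac{4\|X_0-X_\star\|^2}{T^2}. \]
   Context: $\mathbb{A}$ is monotone if $\langle\mathbb{A}x-\mathbb{A}y,x-y\rangle\ge0$ for all $x,y$. $\mathrm{Zer}\,\mathbb{A}=\{x:\mathbb{A}x=0\}$. *)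

theory Defs
  imports "HOL-Analysis.Analysis"
begin

definition monotone_op :: "('a::real_inner \<Rightarrow> 'a) \<Rightarrow> bool" where
  "monotone_op A \<longleftrightarrow> (\<forall>x y. inner (A x - A y) (x - y) \<ge> 0)"

definition dual_anchor_sol ::
  "('a::euclidean_space \<Rightarrow> 'a) \<Rightarrow> real \<Rightarrow> 'a \<Rightarrow> (real \<Rightarrow> 'a) \<Rightarrow> (real \<Rightarrow> 'a) \<Rightarrow> bool" where
  "dual_anchor_sol A T X0 X Z \<longleftrightarrow>
     continuous_on {0..<T} X \<and> continuous_on {0..<T} Z \<and>
     X 0 = X0 \<and> Z 0 = 0 \<and>
     (\<forall>t\<in>{0<..<T}.
        (X has_vector_derivative (- Z t - A (X t))) (at t) \<and>
        (Z has_vector_derivative (- (1 / (T - t)) *\<^sub>R Z t - (1 / (T - t)) *\<^sub>R A (X t))) (at t))"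

end

theory Submission
  imports Defs
begin

(*
  The Z-equation is linear in Z: by variation of constants
  Z t = -(T - t) * integral_0^t A (X s) / (T - s)^2 ds, a weighted average of -A o X that
  tends to -A (X T) as t -> T. Substituting it turns the system into the integral equation
  X t = X0 + integral_0^t (-Z - A o X). Averaging is non-expansive in the sup norm, so the
  right-hand side is 2L-Lipschitz in X and Banach's fixed point theorem in Bielecki's weighted
  norm gives a unique solution, continuous up to T.

  For the rate, let w = A (X T) and
    E t = |w|^2 - |Z t + w|^2 + 2 / (T - t) * <Z t + w, X t - X T>.
  Along the flow E' t = -2 / (T - t)^2 * <A (X t) - w, X t - X T>, which is <= 0 by
  monotonicity. Hence |w|^2 = lim E <= E 0 = 2 / T * <w, X0 - X T> <= 2 / T * <w, X0 - Xs>
  for a zero Xs (monotonicity again), and Cauchy-Schwarz gives |w| <= 2 |X0 - Xs| / T.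
*)

lemma has_integral_inverse_power2_diff:
  fixes a t T :: real
  assumes "a \<le> t" "t < T"
  shows "((\<lambda>s. 1 / (T - s)^2) has_integral (1 / (T - t) - 1 / (T - a))) {a..t}"
proof -
  have "((\<lambda>s. 1 / (T - s)^2) has_integral ((\<lambda>s. 1 / (T - s)) t - (\<lambda>s. 1 / (T - s)) a)) {a..t}"
  proof (rule fundamental_theorem_of_calculus[OF \<open>a \<le> t\<close>])
    fix x assume "x \<in> {a..t}"
    then have "T - x \<noteq> 0" using assms by auto
    then show "((\<lambda>s. 1 / (T - s)) has_vector_derivative 1 / (T - x)^2) (at x within {a..t})"
      unfolding has_real_derivative_iff_has_vector_derivative[symmetric]
      by (auto intro!: derivative_eq_intros simp: power2_eq_square)
  qed
  then show ?thesis by simp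
qed

lemma has_integral_exp_mult:
  fixes K t :: real
  assumes "K \<noteq> 0" "0 \<le> t"
  shows "((\<lambda>s. exp (K * s)) has_integral ((exp (K * t) - 1) / K)) {0..t}"
proof -
  have "((\<lambda>s. exp (K * s)) has_integral ((\<lambda>s. exp (K * s) / K) t - (\<lambda>s. exp (K * s) / K) 0)) {0..t}"
  proof (rule fundamental_theorem_of_calculus[OF \<open>0 \<le> t\<close>])
    fix x assume "x \<in> {0..t}"
    show "((\<lambda>s. exp (K * s) / K) has_vector_derivative exp (K * x)) (at x within {0..t})"
      unfolding has_real_derivative_iff_has_vector_derivative[symmetric]
      using assms by (auto intro!: derivative_eq_intros)
  qed
  then show ?thesis by (simp add: diff_divide_distrib)
qed

lemma norm_integral_tail_le:
  fixes f :: "real \<Rightarrow> 'a::banach"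
  assumes f: "continuous_on {a..b} f" and t: "t \<in> {a..b}"
    and M: "\<And>s. s \<in> {a..b} \<Longrightarrow> norm (f s) \<le> M"
  shows "norm (integral {a..b} f - integral {a..t} f) \<le> M * (b - t)"
proof -
  have "integral {a..t} f + integral {t..b} f = integral {a..b} f"
    using t by (intro Henstock_Kurzweil_Integration.integral_combine
        integrable_continuous_interval f) auto
  then have "norm (integral {a..b} f - integral {a..t} f) = norm (integral {t..b} f)"
    by (metis add_diff_cancel_left')
  also have "\<dots> \<le> integral {t..b} (\<lambda>s. M)"
    using t by (intro integral_norm_bound_integral integrable_continuous_interval
        continuous_on_subset[OF f] M) auto
  also have "\<dots> = M * (b - t)" using t by simp
  finally show ?thesis .
qed

lemma has_real_derivative_inner:
  fixes f g :: "real \<Rightarrow> 'a::real_inner"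
  assumes "(f has_vector_derivative f') (at x)" "(g has_vector_derivative g') (at x)"
  shows "((\<lambda>t. inner (f t) (g t)) has_real_derivative inner (f x) g' + inner f' (g x)) (at x)"
  using bounded_bilinear.has_vector_derivative[OF bounded_bilinear_inner assms]
  by (simp add: has_real_derivative_iff_has_vector_derivative)

section \<open>The anchor variable\<close>

text \<open>The solution of \<open>Z' = - (Z + u) / (T - t)\<close>, \<open>Z 0 = 0\<close>, by variation of constants:
  \<open>(Z t / (T - t))' = - u t / (T - t)^2\<close>. For \<open>t \<ge> T\<close> we put the left limit \<open>- u T\<close>.\<close>
definition anchor_Z :: "real \<Rightarrow> (real \<Rightarrow> 'a::euclidean_space) \<Rightarrow> real \<Rightarrow> 'a" where
  "anchor_Z T u t =
     (if t < T then - ((T - t) *\<^sub>R integral {0..t} (\<lambda>s. (1 / (T - s)^2) *\<^sub>R u s)) else - u T)"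

lemma anchor_Z_0: "0 < T \<Longrightarrow> anchor_Z T u 0 = 0"
  by (simp add: anchor_Z_def)

lemma continuous_on_anchor_Z_integrand:
  fixes u :: "real \<Rightarrow> 'a::euclidean_space"
  assumes "continuous_on {0..t} u" "t < T"
  shows "continuous_on {0..t} (\<lambda>s. (1 / (T - s)^2) *\<^sub>R u s)"
proof (rule continuous_on_scaleR[OF _ assms(1)])
  show "continuous_on {0..t} (\<lambda>s. 1 / (T - s)^2)"
    using assms(2) by (intro continuous_intros) auto
qed

lemma integrable_anchor_Z_integrand:
  fixes u :: "real \<Rightarrow> 'a::euclidean_space"
  assumes "continuous_on {0..t} u" "t < T"
  shows "(\<lambda>s. (1 / (T - s)^2) *\<^sub>R u s) integrable_on {0..t}"
  using assms by (intro integrable_continuous_interval continuous_on_anchor_Z_integrand)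

lemma anchor_Z_diff:
  assumes "continuous_on {0..t} u1" "continuous_on {0..t} u2"
  shows "anchor_Z T (\<lambda>s. u1 s - u2 s) t = anchor_Z T u1 t - anchor_Z T u2 t"
proof (cases "t < T")
  case True
  have "integral {0..t} (\<lambda>s. (1 / (T - s)^2) *\<^sub>R (u1 s - u2 s)) =
      integral {0..t} (\<lambda>s. (1 / (T - s)^2) *\<^sub>R u1 s) - integral {0..t} (\<lambda>s. (1 / (T - s)^2) *\<^sub>R u2 s)"
    unfolding scaleR_diff_right
    by (intro integral_diff integrable_anchor_Z_integrand assms True)
  then show ?thesis
    using True by (simp add: anchor_Z_def scaleR_diff_right)
qed (simp add: anchor_Z_def)

lemma anchor_Z_const:
  assumes "0 \<le> t" "t \<le> T" "0 < T"
  shows "anchor_Z T (\<lambda>_. c) t = - (t / T) *\<^sub>R c"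
proof (cases "t < T")
  case True
  have "integral {0..t} (\<lambda>s. (1 / (T - s)^2) *\<^sub>R c) = (1 / (T - t) - 1 / T) *\<^sub>R c"
    by (rule integral_unique)
      (use has_integral_scaleR_left[OF has_integral_inverse_power2_diff[OF assms(1) True]] in simp)
  moreover have "(T - t) * (1 / (T - t) - 1 / T) = t / T"
    using True assms by (simp add: field_simps)
  ultimately show ?thesis
    using True by (simp add: anchor_Z_def)
qed (use assms in \<open>simp add: anchor_Z_def\<close>)

text \<open>With \<open>C = 0\<close> this is non-expansiveness; the \<open>C\<close>-term absorbs the values of \<open>u\<close> away
  from \<open>T\<close> in the limit at \<open>T\<close>.\<close>
lemma norm_anchor_Z_le:
  assumes t: "0 \<le> t" "t \<le> T" and u: "continuous_on {0..t} u" and "0 \<le> e" "0 \<le> C"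
    and bound: "\<And>s. s \<in> {0..t} \<Longrightarrow> norm (u s) \<le> e + C * (T - s)^2"
  shows "norm (anchor_Z T u t) \<le> e + C * T * (T - t)"
proof (cases "t < T")
  case False
  then show ?thesis using bound[of T] t by (simp add: anchor_Z_def)
next
  case True
  have majorant: "((\<lambda>s. e * (1 / (T - s)^2) + C) has_integral
      (e * (1 / (T - t) - 1 / T) + C * t)) {0..t}"
    using has_integral_add[OF
        has_integral_mult_right[OF has_integral_inverse_power2_diff[OF t(1) True]]
        has_integral_const_real[of C 0 t]] t
    by (simp add: mult.commute)
  have "norm (integral {0..t} (\<lambda>s. (1 / (T - s)^2) *\<^sub>R u s)) \<le>
      integral {0..t} (\<lambda>s. e * (1 / (T - s)^2) + C)"
  proof (rule integral_norm_bound_integral[OF integrable_anchor_Z_integrand[OF u True]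
        has_integral_integrable[OF majorant]])
    fix s assume s: "s \<in> {0..t}"
    then have "0 < T - s" using True by auto
    then have "(1 / (T - s)^2) * norm (u s) \<le> (1 / (T - s)^2) * (e + C * (T - s)^2)"
      using bound[OF s] by (intro mult_left_mono) auto
    also have "\<dots> = e * (1 / (T - s)^2) + C"
      using \<open>0 < T - s\<close> by (simp add: field_simps)
    finally show "norm ((1 / (T - s)^2) *\<^sub>R u s) \<le> e * (1 / (T - s)^2) + C"
      by simp
  qed
  also have "\<dots> = e * (1 / (T - t) - 1 / T) + C * t"
    using majorant by (rule integral_unique)
  finally have "norm (anchor_Z T u t) \<le> (T - t) * (e * (1 / (T - t) - 1 / T) + C * t)"
    using True by (simp add: anchor_Z_def mult_left_mono)
  also have "\<dots> = e - e * (T - t) / T + C * t * (T - t)"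
    using True t by (simp add: field_simps)
  also have "\<dots> \<le> e + C * T * (T - t)"
  proof -
    have "0 \<le> e * (T - t) / T" using True t \<open>0 \<le> e\<close> by simp
    moreover have "C * t * (T - t) \<le> C * T * (T - t)"
      using True \<open>0 \<le> C\<close> by (intro mult_right_mono mult_left_mono) auto
    ultimately show ?thesis by linarith
  qed
  finally show ?thesis .
qed

lemma anchor_Z_dist_le:
  assumes "0 \<le> t" "t \<le> T" "continuous_on {0..t} u1" "continuous_on {0..t} u2"
    and "\<And>s. s \<in> {0..t} \<Longrightarrow> norm (u1 s - u2 s) \<le> B"
  shows "norm (anchor_Z T u1 t - anchor_Z T u2 t) \<le> B"
proof -
  have "norm (u1 0 - u2 0) \<le> B" using assms by simp
  then have "0 \<le> B" using norm_ge_zero order_trans by blast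
  have "norm (anchor_Z T (\<lambda>s. u1 s - u2 s) t) \<le> B + 0 * T * (T - t)"
    using assms \<open>0 \<le> B\<close> by (intro norm_anchor_Z_le continuous_intros) auto
  then show ?thesis by (simp add: anchor_Z_diff[OF assms(3,4)])
qed

lemma continuous_on_anchor_Z:
  fixes u :: "real \<Rightarrow> 'a::euclidean_space"
  assumes "b < T" "continuous_on {0..b} u"
  shows "continuous_on {0..b} (anchor_Z T u)"
proof -
  have "continuous_on {0..b} (\<lambda>t. - ((T - t) *\<^sub>R integral {0..t} (\<lambda>s. (1 / (T - s)^2) *\<^sub>R u s)))"
    using assms
    by (intro continuous_intros indefinite_integral_continuous_1 integrable_anchor_Z_integrand)
  then show ?thesis
    by (rule continuous_on_cong[THEN iffD1, rotated 2]) (use assms(1) in \<open>auto simp: anchor_Z_def\<close>)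
qed

lemma anchor_Z_tendsto_0:
  fixes v :: "real \<Rightarrow> 'a::euclidean_space"
  assumes T: "0 < T" and v: "continuous_on {0..T} v" "v T = 0"
  shows "(anchor_Z T v \<longlongrightarrow> 0) (at_left T)"
  unfolding tendsto_iff
proof (intro allI impI)
  fix \<epsilon> :: real assume "0 < \<epsilon>"
  obtain B where "0 < B" and B: "\<And>s. s \<in> {0..T} \<Longrightarrow> norm (v s) \<le> B"
    using compact_imp_bounded[OF compact_continuous_image[OF v(1) compact_Icc]]
    by (auto simp: bounded_pos)
  obtain \<delta> where "0 < \<delta>" and \<delta>: "\<And>s. s \<in> {0..T} \<Longrightarrow> dist s T < \<delta> \<Longrightarrow> norm (v s) < \<epsilon> / 2"
    using continuous_on_iff[THEN iffD1, OF v(1), rule_format, of T "\<epsilon> / 2"] T \<open>0 < \<epsilon>\<close>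
    by (auto simp: v(2))
  define C where "C = B / \<delta>^2"
  have C: "0 \<le> C" using \<open>0 < B\<close> by (simp add: C_def)
  have pointwise: "norm (v s) \<le> \<epsilon> / 2 + C * (T - s)^2" if s: "s \<in> {0..T}" for s
  proof (cases "T - s < \<delta>")
    case True
    then have "norm (v s) < \<epsilon> / 2" using \<delta>[OF s] s by (simp add: dist_real_def)
    moreover have "0 \<le> C * (T - s)^2" using C by simp
    ultimately show ?thesis by linarith
  next
    case False
    then have "\<delta>^2 \<le> (T - s)^2" using \<open>0 < \<delta>\<close> by (intro power_mono) auto
    then have "B \<le> C * (T - s)^2"
      using \<open>0 < \<delta>\<close> \<open>0 < B\<close> by (simp add: C_def field_simps)
    then show ?thesis using B[OF s] \<open>0 < \<epsilon>\<close> by linarith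
  qed
  have "((\<lambda>t. \<epsilon> / 2 + C * T * (T - t)) \<longlongrightarrow> \<epsilon> / 2 + C * T * (T - T)) (at_left T)"
    by (intro tendsto_intros)
  then have "\<forall>\<^sub>F t in at_left T. \<epsilon> / 2 + C * T * (T - t) < \<epsilon>"
    by (rule order_tendstoD(2)) (use \<open>0 < \<epsilon>\<close> in simp)
  moreover have "\<forall>\<^sub>F t in at_left T. norm (anchor_Z T v t) \<le> \<epsilon> / 2 + C * T * (T - t)"
    using eventually_at_left_real[OF T]
  proof (rule eventually_mono)
    fix t assume t: "t \<in> {0<..<T}"
    show "norm (anchor_Z T v t) \<le> \<epsilon> / 2 + C * T * (T - t)"
      using t \<open>0 < \<epsilon>\<close> C pointwise
      by (intro norm_anchor_Z_le continuous_on_subset[OF v(1)]) auto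
  qed
  ultimately show "\<forall>\<^sub>F t in at_left T. dist (anchor_Z T v t) 0 < \<epsilon>"
    by eventually_elim simp
qed

lemma anchor_Z_tendsto:
  fixes u :: "real \<Rightarrow> 'a::euclidean_space"
  assumes T: "0 < T" and u: "continuous_on {0..T} u"
  shows "(anchor_Z T u \<longlongrightarrow> - u T) (at_left T)"
proof -
  have "((\<lambda>t. anchor_Z T (\<lambda>s. u s - u T) t - (t / T) *\<^sub>R u T) \<longlongrightarrow> 0 - (T / T) *\<^sub>R u T) (at_left T)"
    using T u by (intro tendsto_intros anchor_Z_tendsto_0 continuous_intros) auto
  then have "((\<lambda>t. anchor_Z T (\<lambda>s. u s - u T) t - (t / T) *\<^sub>R u T) \<longlongrightarrow> - u T) (at_left T)"
    using T by simp
  moreover have "\<forall>\<^sub>F t in at_left T. anchor_Z T (\<lambda>s. u s - u T) t - (t / T) *\<^sub>R u T = anchor_Z T u t"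
    using eventually_at_left_real[OF T]
  proof (rule eventually_mono)
    fix t assume t: "t \<in> {0<..<T}"
    have "continuous_on {0..t} u" using t by (intro continuous_on_subset[OF u]) auto
    then show "anchor_Z T (\<lambda>s. u s - u T) t - (t / T) *\<^sub>R u T = anchor_Z T u t"
      using t T by (simp add: anchor_Z_diff anchor_Z_const)
  qed
  ultimately show ?thesis by (rule Lim_transform_eventually)
qed

lemma continuous_on_anchor_Z_Icc:
  fixes u :: "real \<Rightarrow> 'a::euclidean_space"
  assumes T: "0 < T" and u: "continuous_on {0..T} u"
  shows "continuous_on {0..T} (anchor_Z T u)"
proof (rule continuous_on_IccI[OF _ _ _ T])
  have "continuous_on {0..T / 2} (anchor_Z T u)"
    using T by (intro continuous_on_anchor_Z continuous_on_subset[OF u]) auto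
  then show "(anchor_Z T u \<longlongrightarrow> anchor_Z T u 0) (at_right 0)"
    by (rule continuous_on_Icc_at_rightD) (use T in simp)
  show "(anchor_Z T u \<longlongrightarrow> anchor_Z T u T) (at_left T)"
    using anchor_Z_tendsto[OF T u] by (simp add: anchor_Z_def)
  fix x assume x: "0 < x" "x < T"
  define b where "b = (x + T) / 2"
  have b: "x < b" "b < T" using x by (auto simp: b_def)
  have "continuous_on {0..b} (anchor_Z T u)"
    using b by (intro continuous_on_anchor_Z continuous_on_subset[OF u]) auto
  then have "continuous (at x within {0..b}) (anchor_Z T u)"
    using x b by (simp add: continuous_on_eq_continuous_within)
  moreover have "at x within {0..b} = at x" using x b by (intro at_within_Icc_at) auto
  ultimately show "(anchor_Z T u \<longlongrightarrow> anchor_Z T u x) (at x)"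
    by (simp add: continuous_within)
qed

lemma anchor_Z_has_vector_derivative:
  fixes u :: "real \<Rightarrow> 'a::euclidean_space"
  assumes u: "continuous_on {0..<T} u" and t: "0 < t" "t < T"
  shows "(anchor_Z T u has_vector_derivative
            (- (1 / (T - t)) *\<^sub>R anchor_Z T u t - (1 / (T - t)) *\<^sub>R u t)) (at t)"
proof -
  define f where "f = (\<lambda>s. (1 / (T - s)^2) *\<^sub>R u s)"
  define b where "b = (t + T) / 2"
  have b: "t < b" "b < T" using t by (auto simp: b_def)
  have "continuous_on {0..b} f"
    unfolding f_def using b
    by (intro continuous_on_anchor_Z_integrand continuous_on_subset[OF u]) auto
  then have "((\<lambda>s. integral {0..s} f) has_vector_derivative f t) (at t within {0..b})"
    using t b by (intro integral_has_vector_derivative) auto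
  moreover have "at t within {0..b} = at t" using t b by (intro at_within_Icc_at) auto
  ultimately have "((\<lambda>s. integral {0..s} f) has_vector_derivative f t) (at t)" by simp
  moreover have "((\<lambda>s. T - s) has_real_derivative -1) (at t)"
    by (auto intro!: derivative_eq_intros)
  ultimately have "((\<lambda>s. (T - s) *\<^sub>R integral {0..s} f) has_vector_derivative
      (T - t) *\<^sub>R f t + (-1) *\<^sub>R integral {0..t} f) (at t)"
    by (intro has_vector_derivative_scaleR)
  then have "((\<lambda>s. - ((T - s) *\<^sub>R integral {0..s} f)) has_vector_derivative
      - ((T - t) *\<^sub>R f t + (-1) *\<^sub>R integral {0..t} f)) (at t)"
    by (rule has_vector_derivative_minus)
  moreover have "- ((T - t) *\<^sub>R f t + (-1) *\<^sub>R integral {0..t} f) =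
      - (1 / (T - t)) *\<^sub>R anchor_Z T u t - (1 / (T - t)) *\<^sub>R u t"
  proof -
    have "(T - t) *\<^sub>R f t = (1 / (T - t)) *\<^sub>R u t" using t by (simp add: f_def power2_eq_square)
    moreover have "(1 / (T - t)) * (T - t) = 1" using t by simp
    ultimately show ?thesis using t by (simp add: anchor_Z_def f_def)
  qed
  ultimately have "((\<lambda>s. - ((T - s) *\<^sub>R integral {0..s} f)) has_vector_derivative
      - (1 / (T - t)) *\<^sub>R anchor_Z T u t - (1 / (T - t)) *\<^sub>R u t) (at t)"
    by simp
  then show ?thesis
  proof (rule has_vector_derivative_transform_within_open)
    show "open {..<T}" "t \<in> {..<T}" using t by auto
    show "- ((T - s) *\<^sub>R integral {0..s} f) = anchor_Z T u s" if "s \<in> {..<T}" for s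
      using that by (simp add: anchor_Z_def f_def)
  qed
qed

lemma anchor_Z_unique:
  fixes Z u :: "real \<Rightarrow> 'a::euclidean_space"
  assumes Z: "continuous_on {0..<T} Z" "Z 0 = 0"
    and dZ: "\<And>s. s \<in> {0<..<T} \<Longrightarrow>
      (Z has_vector_derivative (- (1 / (T - s)) *\<^sub>R Z s - (1 / (T - s)) *\<^sub>R u s)) (at s)"
    and t: "t \<in> {0..<T}"
  shows "Z t = anchor_Z T u t"
proof (cases "t = 0")
  case True
  then show ?thesis using t Z(2) by (simp add: anchor_Z_0)
next
  case False
  then have t: "0 < t" "t < T" using t by auto
  define q where "q = (\<lambda>s. (1 / (T - s)) *\<^sub>R Z s)"
  have "((\<lambda>s. - ((1 / (T - s)^2) *\<^sub>R u s)) has_integral (q t - q 0)) {0..t}"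
  proof (rule fundamental_theorem_of_calculus_interior)
    have "continuous_on {0..t} (\<lambda>s. 1 / (T - s))" using t by (intro continuous_intros) auto
    then show "continuous_on {0..t} q"
      unfolding q_def
      by (rule continuous_on_scaleR) (rule continuous_on_subset[OF Z(1)], use t in auto)
    fix s assume s: "s \<in> {0<..<t}"
    then have "((\<lambda>s. 1 / (T - s)) has_real_derivative 1 / (T - s)^2) (at s)"
      using t by (auto intro!: derivative_eq_intros simp: power2_eq_square)
    moreover have "(Z has_vector_derivative (- (1 / (T - s)) *\<^sub>R Z s - (1 / (T - s)) *\<^sub>R u s)) (at s)"
      using s t by (intro dZ) auto
    ultimately have "(q has_vector_derivative
        (1 / (T - s)) *\<^sub>R (- (1 / (T - s)) *\<^sub>R Z s - (1 / (T - s)) *\<^sub>R u s)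
          + (1 / (T - s)^2) *\<^sub>R Z s) (at s)"
      unfolding q_def by (rule has_vector_derivative_scaleR)
    moreover have "(1 / (T - s)) *\<^sub>R (- (1 / (T - s)) *\<^sub>R Z s - (1 / (T - s)) *\<^sub>R u s)
        + (1 / (T - s)^2) *\<^sub>R Z s = - ((1 / (T - s)^2) *\<^sub>R u s)"
      by (simp add: scaleR_diff_right power2_eq_square)
    ultimately show "(q has_vector_derivative - ((1 / (T - s)^2) *\<^sub>R u s)) (at s)"
      by simp
  qed (use t in simp)
  from has_integral_neg[OF this]
  have "integral {0..t} (\<lambda>s. (1 / (T - s)^2) *\<^sub>R u s) = - q t"
    using Z(2) by (simp add: q_def integral_unique)
  then show ?thesis
    using t by (simp add: anchor_Z_def q_def)
qed

section \<open>The Picard map\<close>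

definition dual_anchor_velocity :: "('a::euclidean_space \<Rightarrow> 'a) \<Rightarrow> real \<Rightarrow> (real \<Rightarrow> 'a) \<Rightarrow> real \<Rightarrow> 'a"
  where "dual_anchor_velocity A T X t = - anchor_Z T (\<lambda>s. A (X s)) t - A (X t)"

definition dual_anchor_picard :: "('a::euclidean_space \<Rightarrow> 'a) \<Rightarrow> real \<Rightarrow> 'a \<Rightarrow> (real \<Rightarrow> 'a) \<Rightarrow> real \<Rightarrow> 'a"
  where "dual_anchor_picard A T X0 X t = X0 + integral {0..t} (dual_anchor_velocity A T X)"

lemma continuous_on_dual_anchor_velocity:
  fixes A :: "'a::euclidean_space \<Rightarrow> 'a"
  assumes A: "continuous_on UNIV A" and T: "0 < T" and b: "b \<le> T" and X: "continuous_on {0..b} X"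
  shows "continuous_on {0..b} (dual_anchor_velocity A T X)"
proof -
  have AX: "continuous_on {0..b} (\<lambda>s. A (X s))"
    using continuous_on_compose2[OF A X] by simp
  have "continuous_on {0..b} (anchor_Z T (\<lambda>s. A (X s)))"
  proof (cases "b < T")
    case True
    then show ?thesis using AX by (rule continuous_on_anchor_Z)
  next
    case False
    then show ?thesis using continuous_on_anchor_Z_Icc[OF T] AX b by simp
  qed
  then show ?thesis
    unfolding dual_anchor_velocity_def using AX by (intro continuous_intros)
qed

lemma dual_anchor_velocity_dist_le:
  fixes A :: "'a::euclidean_space \<Rightarrow> 'a"
  assumes A: "L-lipschitz_on UNIV A" and t: "0 \<le> t" "t \<le> T"
    and X1: "continuous_on {0..t} X1" and X2: "continuous_on {0..t} X2"
    and B: "\<And>s. s \<in> {0..t} \<Longrightarrow> norm (X1 s - X2 s) \<le> B"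
  shows "norm (dual_anchor_velocity A T X1 t - dual_anchor_velocity A T X2 t) \<le> 2 * L * B"
proof -
  have cA: "continuous_on UNIV A" using A by (rule lipschitz_on_continuous_on)
  have AB: "norm (A (X1 s) - A (X2 s)) \<le> L * B" if "s \<in> {0..t}" for s
  proof -
    have "norm (A (X1 s) - A (X2 s)) \<le> L * norm (X1 s - X2 s)"
      using lipschitz_onD[OF A] by (simp add: dist_norm)
    also have "\<dots> \<le> L * B" using B[OF that] lipschitz_on_nonneg[OF A] by (rule mult_left_mono)
    finally show ?thesis .
  qed
  have "norm (anchor_Z T (\<lambda>s. A (X1 s)) t - anchor_Z T (\<lambda>s. A (X2 s)) t) \<le> L * B"
    using t AB
    by (intro anchor_Z_dist_le continuous_on_compose2[OF cA X1] continuous_on_compose2[OF cA X2])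
      auto
  moreover have "norm (A (X1 t) - A (X2 t)) \<le> L * B" using AB t by simp
  moreover have "dual_anchor_velocity A T X1 t - dual_anchor_velocity A T X2 t =
      - ((anchor_Z T (\<lambda>s. A (X1 s)) t - anchor_Z T (\<lambda>s. A (X2 s)) t) + (A (X1 t) - A (X2 t)))"
    by (simp add: dual_anchor_velocity_def algebra_simps)
  then have "norm (dual_anchor_velocity A T X1 t - dual_anchor_velocity A T X2 t) \<le>
      norm (anchor_Z T (\<lambda>s. A (X1 s)) t - anchor_Z T (\<lambda>s. A (X2 s)) t) + norm (A (X1 t) - A (X2 t))"
    by (simp only: norm_minus_cancel norm_triangle_ineq)
  ultimately show ?thesis by linarith
qed

lemma dual_anchor_picard_dist_le:
  fixes A :: "'a::euclidean_space \<Rightarrow> 'a"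
  assumes A: "L-lipschitz_on UNIV A" and T: "0 < T" and K: "0 < K" and b: "b \<le> T"
    and X1: "continuous_on {0..b} X1" and X2: "continuous_on {0..b} X2"
    and D: "\<And>s. s \<in> {0..b} \<Longrightarrow> norm (X1 s - X2 s) \<le> exp (K * s) * D"
    and t: "t \<in> {0..b}"
  shows "norm (dual_anchor_picard A T X0 X1 t - dual_anchor_picard A T X0 X2 t)
           \<le> (2 * L / K) * exp (K * t) * D"
proof -
  have L: "0 \<le> L" using A by (rule lipschitz_on_nonneg)
  have cA: "continuous_on UNIV A" using A by (rule lipschitz_on_continuous_on)
  have "norm (X1 0 - X2 0) \<le> D" using D[of 0] t by simp
  then have "0 \<le> D" using norm_ge_zero order_trans by blast
  have sub: "{0..t} \<subseteq> {0..b}" using t by auto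
  have V: "dual_anchor_velocity A T Xi integrable_on {0..t}" if "continuous_on {0..b} Xi" for Xi
    by (intro integrable_continuous_interval continuous_on_subset[OF _ sub]
        continuous_on_dual_anchor_velocity[OF cA T b that])
  have pointwise: "norm (dual_anchor_velocity A T X1 s - dual_anchor_velocity A T X2 s)
      \<le> 2 * L * D * exp (K * s)" if s: "s \<in> {0..t}" for s
  proof -
    have "norm (X1 r - X2 r) \<le> exp (K * s) * D" if "r \<in> {0..s}" for r
    proof -
      have "norm (X1 r - X2 r) \<le> exp (K * r) * D" using that s t by (intro D) auto
      also have "\<dots> \<le> exp (K * s) * D" using that K \<open>0 \<le> D\<close> by (intro mult_right_mono) auto
      finally show ?thesis .
    qed
    then have "norm (dual_anchor_velocity A T X1 s - dual_anchor_velocity A T X2 s)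
        \<le> 2 * L * (exp (K * s) * D)"
      using s t b by (intro dual_anchor_velocity_dist_le[OF A]
          continuous_on_subset[OF X1] continuous_on_subset[OF X2]) auto
    then show ?thesis by (simp add: algebra_simps)
  qed
  have majorant: "((\<lambda>s. 2 * L * D * exp (K * s)) has_integral
      2 * L * D * ((exp (K * t) - 1) / K)) {0..t}"
    using K t by (intro has_integral_mult_right has_integral_exp_mult) auto
  have "norm (dual_anchor_picard A T X0 X1 t - dual_anchor_picard A T X0 X2 t) =
      norm (integral {0..t} (\<lambda>s. dual_anchor_velocity A T X1 s - dual_anchor_velocity A T X2 s))"
    by (simp add: dual_anchor_picard_def integral_diff[OF V[OF X1] V[OF X2]])
  also have "\<dots> \<le> integral {0..t} (\<lambda>s. 2 * L * D * exp (K * s))"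
    by (intro integral_norm_bound_integral integrable_diff V X1 X2 pointwise
        has_integral_integrable[OF majorant])
  also have "\<dots> = (2 * L / K) * exp (K * t) * D - (2 * L / K) * D"
    using integral_unique[OF majorant] K by (simp add: field_simps)
  also have "\<dots> \<le> (2 * L / K) * exp (K * t) * D"
    using L K \<open>0 \<le> D\<close> by simp
  finally show ?thesis .
qed

lemma continuous_on_dual_anchor_picard:
  fixes A :: "'a::euclidean_space \<Rightarrow> 'a"
  assumes "continuous_on UNIV A" "0 < T" "b \<le> T" "continuous_on {0..b} X"
  shows "continuous_on {0..b} (dual_anchor_picard A T X0 X)"
  unfolding dual_anchor_picard_def using assms
  by (intro continuous_intros indefinite_integral_continuous_1 integrable_continuous_interval
      continuous_on_dual_anchor_velocity)

lemma dual_anchor_picard_Bielecki_dist_le: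
  fixes A :: "'a::euclidean_space \<Rightarrow> 'a" and g1 g2 :: "real \<Rightarrow>\<^sub>C 'a"
  assumes A: "L-lipschitz_on UNIV A" and T: "0 < T" and K: "0 < K" and t: "t \<in> {0..T}"
  shows "exp (- (K * t)) * norm (dual_anchor_picard A T X0 (\<lambda>s. exp (K * s) *\<^sub>R g1 s) t
           - dual_anchor_picard A T X0 (\<lambda>s. exp (K * s) *\<^sub>R g2 s) t) \<le> (2 * L / K) * dist g1 g2"
proof -
  have "norm (exp (K * s) *\<^sub>R g1 s - exp (K * s) *\<^sub>R g2 s) \<le> exp (K * s) * dist g1 g2" for s
    using dist_bounded[of g1 s g2] by (simp add: dist_norm flip: scaleR_diff_right)
  then have "norm (dual_anchor_picard A T X0 (\<lambda>s. exp (K * s) *\<^sub>R g1 s) t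
      - dual_anchor_picard A T X0 (\<lambda>s. exp (K * s) *\<^sub>R g2 s) t)
      \<le> (2 * L / K) * exp (K * t) * dist g1 g2"
    using t by (intro dual_anchor_picard_dist_le[OF A T K order.refl]
        continuous_intros continuous_on_apply_bcontfun) auto
  then have "exp (- (K * t)) * norm (dual_anchor_picard A T X0 (\<lambda>s. exp (K * s) *\<^sub>R g1 s) t
      - dual_anchor_picard A T X0 (\<lambda>s. exp (K * s) *\<^sub>R g2 s) t)
      \<le> exp (- (K * t)) * ((2 * L / K) * exp (K * t) * dist g1 g2)"
    by (rule mult_left_mono) simp
  also have "\<dots> = (2 * L / K) * dist g1 g2" by (simp add: exp_minus field_simps)
  finally show ?thesis .
qed

lemma dual_anchor_picard_fixpoint_exists:
  fixes A :: "'a::euclidean_space \<Rightarrow> 'a"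
  assumes A: "L-lipschitz_on UNIV A" and T: "0 < T"
  obtains X where "continuous_on {0..T} X" "\<And>t. t \<in> {0..T} \<Longrightarrow> dual_anchor_picard A T X0 X t = X t"
proof -
  have cA: "continuous_on UNIV A" using A by (rule lipschitz_on_continuous_on)
  define K where "K = 4 * L + 1"
  have K: "0 < K" "2 * L / K \<le> 1 / 2"
    using lipschitz_on_nonneg[OF A] by (auto simp: K_def field_simps)
  define F where "F g t = exp (- (K * t)) *\<^sub>R dual_anchor_picard A T X0 (\<lambda>s. exp (K * s) *\<^sub>R g s) t"
    for g :: "real \<Rightarrow>\<^sub>C 'a" and t
  text \<open>Continuous functions on \<open>[0, T]\<close> are represented by bounded continuous functions on
    \<open>\<real>\<close> that are constant outside \<open>[0, T]\<close>.\<close>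
  have "\<forall>g. \<exists>h :: real \<Rightarrow>\<^sub>C 'a. \<forall>x. h x = F g (clamp 0 T x)"
  proof
    fix g
    have "continuous_on (cbox 0 T) (F g)"
      unfolding F_def cbox_interval using cA T
      by (intro continuous_intros continuous_on_dual_anchor_picard continuous_on_apply_bcontfun)
        auto
    then obtain h :: "real \<Rightarrow>\<^sub>C 'a" where "\<And>x. h x = F g (clamp 0 T x)"
      by (rule continuous_on_cbox_bcontfunE) blast
    then show "\<exists>h :: real \<Rightarrow>\<^sub>C 'a. \<forall>x. h x = F g (clamp 0 T x)" by blast
  qed
  then obtain \<Psi> :: "(real \<Rightarrow>\<^sub>C 'a) \<Rightarrow> real \<Rightarrow>\<^sub>C 'a"
    where \<Psi>: "\<And>g x. \<Psi> g x = F g (clamp 0 T x)"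
    by metis
  have "dist (\<Psi> g1) (\<Psi> g2) \<le> 1 / 2 * dist g1 g2" for g1 g2
  proof (rule dist_bound)
    fix x
    have c: "clamp 0 T x \<in> {0..T}"
      using clamp_in_interval[of 0 T x] T by simp
    have "dist (\<Psi> g1 x) (\<Psi> g2 x) = exp (- (K * clamp 0 T x)) *
        norm (dual_anchor_picard A T X0 (\<lambda>s. exp (K * s) *\<^sub>R g1 s) (clamp 0 T x)
          - dual_anchor_picard A T X0 (\<lambda>s. exp (K * s) *\<^sub>R g2 s) (clamp 0 T x))"
      by (simp add: \<Psi> F_def dist_norm flip: scaleR_diff_right)
    also have "\<dots> \<le> (2 * L / K) * dist g1 g2"
      using A T K(1) c by (rule dual_anchor_picard_Bielecki_dist_le)
    also have "\<dots> \<le> 1 / 2 * dist g1 g2" using K by (intro mult_right_mono) auto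
    finally show "dist (\<Psi> g1 x) (\<Psi> g2 x) \<le> 1 / 2 * dist g1 g2" .
  qed
  then obtain g where g: "\<Psi> g = g"
    using banach_fix_type[of "1 / 2" \<Psi>] by auto
  show ?thesis
  proof
    show "continuous_on {0..T} (\<lambda>s. exp (K * s) *\<^sub>R g s)"
      by (intro continuous_intros continuous_on_apply_bcontfun)
    fix t assume "t \<in> {0..T}"
    then have "g t = F g t" using \<Psi>[of g t] g by simp
    then show "dual_anchor_picard A T X0 (\<lambda>s. exp (K * s) *\<^sub>R g s) t = exp (K * t) *\<^sub>R g t"
      by (simp add: F_def exp_minus)
  qed
qed

lemma dual_anchor_picard_fixpoint_unique:
  fixes A :: "'a::euclidean_space \<Rightarrow> 'a"
  assumes A: "L-lipschitz_on UNIV A" and T: "0 < T" and b: "b \<le> T"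
    and X1: "continuous_on {0..b} X1" "\<And>t. t \<in> {0..b} \<Longrightarrow> dual_anchor_picard A T X0 X1 t = X1 t"
    and X2: "continuous_on {0..b} X2" "\<And>t. t \<in> {0..b} \<Longrightarrow> dual_anchor_picard A T X0 X2 t = X2 t"
    and t: "t \<in> {0..b}"
  shows "X1 t = X2 t"
proof -
  define K where "K = 4 * L + 1"
  have K: "0 < K" "2 * L / K \<le> 1 / 2"
    using lipschitz_on_nonneg[OF A] by (auto simp: K_def field_simps)
  define \<Delta> where "\<Delta> s = exp (- (K * s)) * norm (X1 s - X2 s)" for s
  have "continuous_on {0..b} \<Delta>"
    unfolding \<Delta>_def using X1(1) X2(1) by (intro continuous_intros)
  then obtain m where m: "m \<in> {0..b}" and max: "\<And>s. s \<in> {0..b} \<Longrightarrow> \<Delta> s \<le> \<Delta> m"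
    using continuous_attains_sup[OF compact_Icc] t by (metis empty_iff)
  have "0 \<le> \<Delta> m" by (simp add: \<Delta>_def)
  have bound: "norm (X1 s - X2 s) \<le> exp (K * s) * \<Delta> m" if "s \<in> {0..b}" for s
    using max[OF that] by (simp add: \<Delta>_def exp_minus field_simps)
  have "\<Delta> m = exp (- (K * m)) *
      norm (dual_anchor_picard A T X0 X1 m - dual_anchor_picard A T X0 X2 m)"
    using m by (simp add: \<Delta>_def X1(2) X2(2))
  also have "\<dots> \<le> exp (- (K * m)) * ((2 * L / K) * exp (K * m) * \<Delta> m)"
    using m
    by (intro mult_left_mono dual_anchor_picard_dist_le[OF A T K(1) b X1(1) X2(1) bound]) auto
  also have "\<dots> = (2 * L / K) * \<Delta> m" by (simp add: exp_minus field_simps)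
  also have "\<dots> \<le> 1 / 2 * \<Delta> m" using K \<open>0 \<le> \<Delta> m\<close> by (intro mult_right_mono) auto
  finally have "\<Delta> m = 0" using \<open>0 \<le> \<Delta> m\<close> by linarith
  then show ?thesis using bound[OF t] by simp
qed

lemma dual_anchor_sol_Z_eq:
  assumes "dual_anchor_sol A T X0 X Z" "t \<in> {0..<T}"
  shows "Z t = anchor_Z T (\<lambda>s. A (X s)) t"
  using assms by (intro anchor_Z_unique) (auto simp: dual_anchor_sol_def)

lemma dual_anchor_sol_picard_fixpoint:
  assumes sol: "dual_anchor_sol A T X0 X Z" and t: "t \<in> {0..<T}"
  shows "dual_anchor_picard A T X0 X t = X t"
proof -
  have "((\<lambda>s. - Z s - A (X s)) has_integral (X t - X 0)) {0..t}"
  proof (rule fundamental_theorem_of_calculus_interior)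
    show "continuous_on {0..t} X"
      using sol t by (auto simp: dual_anchor_sol_def intro: continuous_on_subset)
  qed (use sol t in \<open>auto simp: dual_anchor_sol_def\<close>)
  moreover have "- Z s - A (X s) = dual_anchor_velocity A T X s" if "s \<in> {0..t}" for s
    using that t dual_anchor_sol_Z_eq[OF sol] by (simp add: dual_anchor_velocity_def)
  ultimately have "(dual_anchor_velocity A T X has_integral (X t - X 0)) {0..t}"
    using has_integral_cong[of "{0..t}" "\<lambda>s. - Z s - A (X s)" "dual_anchor_velocity A T X"] by blast
  then have "(dual_anchor_velocity A T X has_integral (X t - X0)) {0..t}"
    using sol by (simp add: dual_anchor_sol_def)
  then show ?thesis
    by (simp add: dual_anchor_picard_def integral_unique)
qed

lemma dual_anchor_sol_of_picard_fixpoint: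
  fixes A :: "'a::euclidean_space \<Rightarrow> 'a"
  assumes A: "continuous_on UNIV A" and T: "0 < T" and X: "continuous_on {0..T} X"
    and fixpoint: "\<And>t. t \<in> {0..T} \<Longrightarrow> dual_anchor_picard A T X0 X t = X t"
  shows "dual_anchor_sol A T X0 X (anchor_Z T (\<lambda>s. A (X s)))"
  unfolding dual_anchor_sol_def
proof (intro conjI ballI)
  have AX: "continuous_on {0..T} (\<lambda>s. A (X s))"
    using continuous_on_compose2[OF A X] by simp
  show "continuous_on {0..<T} X" using X by (rule continuous_on_subset) auto
  show "continuous_on {0..<T} (anchor_Z T (\<lambda>s. A (X s)))"
    using continuous_on_anchor_Z_Icc[OF T AX] by (rule continuous_on_subset) auto
  show "X 0 = X0" using fixpoint[of 0] T by (simp add: dual_anchor_picard_def)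
  show "anchor_Z T (\<lambda>s. A (X s)) 0 = 0" using T by (rule anchor_Z_0)
  fix t assume t: "t \<in> {0<..<T}"
  show "(anchor_Z T (\<lambda>s. A (X s)) has_vector_derivative
      - (1 / (T - t)) *\<^sub>R anchor_Z T (\<lambda>s. A (X s)) t - (1 / (T - t)) *\<^sub>R A (X t)) (at t)"
    using t by (intro anchor_Z_has_vector_derivative continuous_on_subset[OF AX]) auto
  have "((\<lambda>s. integral {0..s} (dual_anchor_velocity A T X)) has_vector_derivative
      dual_anchor_velocity A T X t) (at t within {0..T})"
    using t by (intro integral_has_vector_derivative continuous_on_dual_anchor_velocity A T X) auto
  moreover have "at t within {0..T} = at t" using t by (intro at_within_Icc_at) auto
  ultimately have "((\<lambda>s. integral {0..s} (dual_anchor_velocity A T X)) has_vector_derivative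
      dual_anchor_velocity A T X t) (at t)" by simp
  from has_vector_derivative_add[OF has_vector_derivative_const[of X0] this]
  have "(dual_anchor_picard A T X0 X has_vector_derivative dual_anchor_velocity A T X t) (at t)"
    by (simp add: dual_anchor_picard_def[abs_def])
  then have "(dual_anchor_picard A T X0 X has_vector_derivative
      - anchor_Z T (\<lambda>s. A (X s)) t - A (X t)) (at t)"
    by (simp add: dual_anchor_velocity_def)
  then show "(X has_vector_derivative - anchor_Z T (\<lambda>s. A (X s)) t - A (X t)) (at t)"
  proof (rule has_vector_derivative_transform_within_open[where S = "{0<..<T}"])
    show "open {0<..<T}" "t \<in> {0<..<T}" using t by auto
  qed (auto simp: fixpoint)
qed

lemma dual_anchor_sol_unique:
  fixes A :: "'a::euclidean_space \<Rightarrow> 'a"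
  assumes A: "L-lipschitz_on UNIV A" and T: "0 < T"
    and sol1: "dual_anchor_sol A T X0 X1 Z1" and sol2: "dual_anchor_sol A T X0 X2 Z2"
    and t: "t \<in> {0..<T}"
  shows "X1 t = X2 t \<and> Z1 t = Z2 t"
proof -
  have cont: "continuous_on {0..t} X" if "dual_anchor_sol A T X0 X Z" for X Z
    using that t by (auto simp: dual_anchor_sol_def intro: continuous_on_subset)
  have X_eq: "X1 s = X2 s" if "s \<in> {0..t}" for s
    using that t
    by (intro dual_anchor_picard_fixpoint_unique[OF A T, of t X1 X0 X2] cont[OF sol1] cont[OF sol2]
        dual_anchor_sol_picard_fixpoint[OF sol1] dual_anchor_sol_picard_fixpoint[OF sol2]) auto
  have "integral {0..t} (\<lambda>s. (1 / (T - s)^2) *\<^sub>R A (X1 s)) =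
      integral {0..t} (\<lambda>s. (1 / (T - s)^2) *\<^sub>R A (X2 s))"
    by (rule integral_cong) (simp add: X_eq)
  then have "anchor_Z T (\<lambda>s. A (X1 s)) t = anchor_Z T (\<lambda>s. A (X2 s)) t"
    using t by (simp add: anchor_Z_def)
  then show ?thesis
    using X_eq[of t] t dual_anchor_sol_Z_eq[OF sol1 t] dual_anchor_sol_Z_eq[OF sol2 t] by simp
qed

lemma dual_anchor_picard_fixpoint_dist_end_le:
  fixes A :: "'a::euclidean_space \<Rightarrow> 'a"
  assumes A: "continuous_on UNIV A" and T: "0 < T" and X: "continuous_on {0..T} X"
    and fixpoint: "\<And>t. t \<in> {0..T} \<Longrightarrow> dual_anchor_picard A T X0 X t = X t"
  obtains M where "\<And>t. t \<in> {0..T} \<Longrightarrow> norm (X t - X T) \<le> M * (T - t)"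
proof -
  have V: "continuous_on {0..T} (dual_anchor_velocity A T X)"
    using A T X by (intro continuous_on_dual_anchor_velocity) auto
  then obtain M where M: "\<And>s. s \<in> {0..T} \<Longrightarrow> norm (dual_anchor_velocity A T X s) \<le> M"
    using compact_imp_bounded[OF compact_continuous_image[OF V compact_Icc]]
    by (metis bounded_iff image_eqI)
  show ?thesis
  proof
    fix t assume t: "t \<in> {0..T}"
    have "norm (X t - X T) = norm (integral {0..T} (dual_anchor_velocity A T X) -
        integral {0..t} (dual_anchor_velocity A T X))"
      using t T fixpoint[symmetric] by (simp add: dual_anchor_picard_def norm_minus_commute)
    also have "\<dots> \<le> M * (T - t)" using V t M by (rule norm_integral_tail_le)
    finally show "norm (X t - X T) \<le> M * (T - t)" .
  qed
qed

section \<open>The Lyapunov function\<close>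

definition dual_anchor_energy ::
  "('a::euclidean_space \<Rightarrow> 'a) \<Rightarrow> real \<Rightarrow> (real \<Rightarrow> 'a) \<Rightarrow> (real \<Rightarrow> 'a) \<Rightarrow> 'a \<Rightarrow> real \<Rightarrow> real"
  where "dual_anchor_energy A T X Z XT t =
    (norm (A XT))^2 - (norm (Z t + A XT))^2 + (2 / (T - t)) * inner (Z t + A XT) (X t - XT)"

lemma has_real_derivative_dual_anchor_energy:
  assumes sol: "dual_anchor_sol A T X0 X Z" and t: "t \<in> {0<..<T}"
  shows "(dual_anchor_energy A T X Z XT has_real_derivative
           - (2 / (T - t)^2) * inner (A (X t) - A XT) (X t - XT)) (at t)"
proof -
  define w where "w = A XT"
  define \<tau> where "\<tau> = T - t"
  have \<tau>: "0 < \<tau>" using t by (simp add: \<tau>_def)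
  define Z' where "Z' = - (1 / \<tau>) *\<^sub>R Z t - (1 / \<tau>) *\<^sub>R A (X t)"
  define X' where "X' = - Z t - A (X t)"
  have "(Z has_vector_derivative Z') (at t)" "(X has_vector_derivative X') (at t)"
    using sol t by (auto simp: dual_anchor_sol_def Z'_def X'_def \<tau>_def)
  then have dZ: "((\<lambda>s. Z s + w) has_vector_derivative Z') (at t)"
    and dX: "((\<lambda>s. X s - XT) has_vector_derivative X') (at t)"
    by (auto intro!: derivative_eq_intros)
  have d: "((\<lambda>s. (norm w)^2 - (norm (Z s + w))^2 + 2 / (T - s) * inner (Z s + w) (X s - XT))
      has_real_derivative 0 - (inner (Z t + w) Z' + inner Z' (Z t + w)) +
        (2 / \<tau>^2 * inner (Z t + w) (X t - XT)
          + (inner (Z t + w) X' + inner Z' (X t - XT)) * (2 / (T - t)))) (at t)"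
  proof (intro DERIV_add DERIV_diff DERIV_mult DERIV_const)
    show "((\<lambda>s. (norm (Z s + w))^2) has_real_derivative
        inner (Z t + w) Z' + inner Z' (Z t + w)) (at t)"
      using has_real_derivative_inner[OF dZ dZ] by (simp add: power2_norm_eq_inner)
    show "((\<lambda>s. 2 / (T - s)) has_real_derivative 2 / \<tau>^2) (at t)"
      using \<tau> unfolding \<tau>_def by (auto intro!: derivative_eq_intros simp: power2_eq_square)
    show "((\<lambda>s. inner (Z s + w) (X s - XT)) has_real_derivative
        inner (Z t + w) X' + inner Z' (X t - XT)) (at t)"
      by (rule has_real_derivative_inner[OF dZ dX])
  qed
  have eq: "0 - (inner (Z t + w) Z' + inner Z' (Z t + w)) +
        (2 / \<tau>^2 * inner (Z t + w) (X t - XT)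
          + (inner (Z t + w) X' + inner Z' (X t - XT)) * (2 / \<tau>))
      = - (2 / \<tau>^2) * inner (A (X t) - w) (X t - XT)"
    using \<tau> unfolding Z'_def X'_def
    by (simp add: inner_diff_left inner_diff_right inner_add_left inner_add_right
        inner_commute power2_eq_square field_simps)
  from d[folded \<tau>_def, unfolded eq, unfolded \<tau>_def w_def] show ?thesis
    unfolding dual_anchor_energy_def[abs_def] .
qed

lemma dual_anchor_energy_le_initial:
  assumes mono: "monotone_op A" and sol: "dual_anchor_sol A T X0 X Z" and t: "t \<in> {0..<T}"
  shows "dual_anchor_energy A T X Z XT t \<le> dual_anchor_energy A T X Z XT 0"
proof (rule DERIV_nonpos_imp_decreasing_open[of 0 t "dual_anchor_energy A T X Z XT"])
  show "0 \<le> t" using t by simp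
  fix s assume "0 < s" "s < t"
  then have s: "s \<in> {0<..<T}" using t by simp
  have "0 \<le> inner (A (X s) - A XT) (X s - XT)"
    using mono by (simp add: monotone_op_def)
  then show "\<exists>y. (dual_anchor_energy A T X Z XT has_real_derivative y) (at s) \<and> y \<le> 0"
    using has_real_derivative_dual_anchor_energy[OF sol s] by (intro exI conjI) auto
next
  have "{0..t} \<subseteq> {0..<T}" using t by auto
  then have "continuous_on {0..t} X" "continuous_on {0..t} Z"
    using sol by (auto simp: dual_anchor_sol_def intro: continuous_on_subset)
  then show "continuous_on {0..t} (dual_anchor_energy A T X Z XT)"
    unfolding dual_anchor_energy_def[abs_def] using t by (intro continuous_intros) auto
qed

lemma dual_anchor_energy_tendsto:
  fixes A :: "'a::euclidean_space \<Rightarrow> 'a"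
  assumes T: "0 < T" and Z: "(Z \<longlongrightarrow> - A XT) (at_left T)"
    and X: "\<And>t. t \<in> {0..<T} \<Longrightarrow> norm (X t - XT) \<le> M * (T - t)"
  shows "(dual_anchor_energy A T X Z XT \<longlongrightarrow> (norm (A XT))^2) (at_left T)"
proof -
  have Zw: "((\<lambda>t. Z t + A XT) \<longlongrightarrow> 0) (at_left T)"
    using tendsto_add[OF Z tendsto_const[of "A XT"]] by simp
  have "((\<lambda>t. (2 / (T - t)) * inner (Z t + A XT) (X t - XT)) \<longlongrightarrow> 0) (at_left T)"
  proof (rule Lim_null_comparison)
    show "\<forall>\<^sub>F t in at_left T. norm ((2 / (T - t)) * inner (Z t + A XT) (X t - XT))
        \<le> 2 * M * norm (Z t + A XT)"
      using eventually_at_left_real[OF T]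
    proof (rule eventually_mono)
      fix t assume t: "t \<in> {0<..<T}"
      have "norm ((2 / (T - t)) * inner (Z t + A XT) (X t - XT))
          = (2 / (T - t)) * \<bar>inner (Z t + A XT) (X t - XT)\<bar>"
        using t by (simp add: abs_mult)
      also have "\<dots> \<le> (2 / (T - t)) * (norm (Z t + A XT) * norm (X t - XT))"
        using t by (intro mult_left_mono Cauchy_Schwarz_ineq2) auto
      also have "\<dots> \<le> (2 / (T - t)) * (norm (Z t + A XT) * (M * (T - t)))"
        using t X[of t] by (intro mult_left_mono) auto
      also have "\<dots> = 2 * M * norm (Z t + A XT)" using t by (simp add: field_simps)
      finally show "norm ((2 / (T - t)) * inner (Z t + A XT) (X t - XT))
          \<le> 2 * M * norm (Z t + A XT)" .
    qed
    show "((\<lambda>t. 2 * M * norm (Z t + A XT)) \<longlongrightarrow> 0) (at_left T)"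
      using tendsto_mult_left[OF tendsto_norm[OF Zw], of "2 * M"] by simp
  qed
  moreover have "((\<lambda>t. norm (Z t + A XT)) \<longlongrightarrow> 0) (at_left T)"
    using tendsto_norm[OF Zw] by simp
  ultimately have "(dual_anchor_energy A T X Z XT \<longlongrightarrow> (norm (A XT))^2 - 0^2 + 0) (at_left T)"
    unfolding dual_anchor_energy_def[abs_def] by (intro tendsto_intros)
  then show ?thesis by simp
qed

lemma dual_anchor_energy_bound:
  fixes A :: "'a::euclidean_space \<Rightarrow> 'a"
  assumes mono: "monotone_op A" and T: "0 < T" and sol: "dual_anchor_sol A T X0 X Z"
    and Z: "(Z \<longlongrightarrow> - A XT) (at_left T)"
    and X: "\<And>t. t \<in> {0..<T} \<Longrightarrow> norm (X t - XT) \<le> M * (T - t)"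
  shows "(norm (A XT))^2 \<le> (2 / T) * inner (A XT) (X0 - XT)"
proof -
  have "(dual_anchor_energy A T X Z XT \<longlongrightarrow> (norm (A XT))^2) (at_left T)"
    using T Z X by (rule dual_anchor_energy_tendsto)
  then have "(norm (A XT))^2 \<le> dual_anchor_energy A T X Z XT 0"
  proof (rule tendsto_upperbound)
    show "\<forall>\<^sub>F t in at_left T. dual_anchor_energy A T X Z XT t \<le> dual_anchor_energy A T X Z XT 0"
      using eventually_at_left_real[OF T]
      by (rule eventually_mono) (auto intro: dual_anchor_energy_le_initial[OF mono sol])
  qed (metis trivial_limit_at_left_real)
  also have "\<dots> = (2 / T) * inner (A XT) (X0 - XT)"
    using sol by (simp add: dual_anchor_energy_def dual_anchor_sol_def)
  finally show ?thesis .
qed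

lemma monotone_op_zero_power2_norm_le:
  fixes A :: "'a::real_inner \<Rightarrow> 'a"
  assumes mono: "monotone_op A" and zero: "A Xs = 0" and "0 \<le> c"
    and energy: "(norm (A XT))^2 \<le> c * inner (A XT) (X0 - XT)"
  shows "(norm (A XT))^2 \<le> c^2 * (norm (X0 - Xs))^2"
proof -
  have "0 \<le> inner (A XT) (XT - Xs)"
    using mono zero unfolding monotone_op_def by (metis diff_zero)
  then have "inner (A XT) (X0 - XT) \<le> inner (A XT) (X0 - Xs)"
    by (simp add: inner_diff_right)
  also have "\<dots> \<le> norm (A XT) * norm (X0 - Xs)" by (rule norm_cauchy_schwarz)
  finally have "(norm (A XT))^2 \<le> c * (norm (A XT) * norm (X0 - Xs))"
    using energy \<open>0 \<le> c\<close> by (meson order_trans mult_left_mono)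
  then have sq: "norm (A XT) * norm (A XT) \<le> norm (A XT) * (c * norm (X0 - Xs))"
    by (simp add: power2_eq_square mult.left_commute)
  have "norm (A XT) \<le> c * norm (X0 - Xs)"
  proof (cases "A XT = 0")
    case False
    then show ?thesis using sq by (metis mult_le_cancel_left_pos zero_less_norm_iff)
  qed (use \<open>0 \<le> c\<close> in simp)
  then have "(norm (A XT))^2 \<le> (c * norm (X0 - Xs))^2"
    by (intro power_mono) auto
  then show ?thesis by (simp add: power_mult_distrib)
qed

theorem theorem7p1:
  fixes A :: "'a::euclidean_space \<Rightarrow> 'a" and T :: real and X0 :: 'a
  assumes lip: "\<exists>L. L-lipschitz_on UNIV A"
    and mono: "monotone_op A"
    and T: "T > 0"
  shows "\<exists>X Z. dual_anchor_sol A T X0 X Z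
           \<and> (\<forall>X' Z'. dual_anchor_sol A T X0 X' Z' \<longrightarrow> (\<forall>t\<in>{0..<T}. X' t = X t \<and> Z' t = Z t))
           \<and> (\<exists>XT. (X \<longlongrightarrow> XT) (at_left T)
                  \<and> (\<forall>Xs. A Xs = 0 \<longrightarrow> (norm (A XT))\<^sup>2 \<le> 4 * (norm (X0 - Xs))\<^sup>2 / T\<^sup>2))"
proof -
  obtain L where L: "L-lipschitz_on UNIV A" using lip by blast
  have cA: "continuous_on UNIV A" using L by (rule lipschitz_on_continuous_on)
  obtain X where X: "continuous_on {0..T} X"
    and fixpoint: "\<And>t. t \<in> {0..T} \<Longrightarrow> dual_anchor_picard A T X0 X t = X t"
    using dual_anchor_picard_fixpoint_exists[OF L T] by blast
  define Z where "Z = anchor_Z T (\<lambda>s. A (X s))"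
  have sol: "dual_anchor_sol A T X0 X Z"
    unfolding Z_def using cA T X fixpoint by (rule dual_anchor_sol_of_picard_fixpoint)
  have "(Z \<longlongrightarrow> - A (X T)) (at_left T)"
    unfolding Z_def using T continuous_on_compose2[OF cA X] by (intro anchor_Z_tendsto) auto
  moreover obtain M where "\<And>t. t \<in> {0..T} \<Longrightarrow> norm (X t - X T) \<le> M * (T - t)"
    using dual_anchor_picard_fixpoint_dist_end_le[OF cA T X fixpoint] by blast
  ultimately have energy: "(norm (A (X T)))^2 \<le> (2 / T) * inner (A (X T)) (X0 - X T)"
    by (intro dual_anchor_energy_bound[OF mono T sol, of "X T" M]) auto
  have rate: "(norm (A (X T)))^2 \<le> 4 * (norm (X0 - Xs))^2 / T^2" if "A Xs = 0" for Xs
    using monotone_op_zero_power2_norm_le[OF mono that _ energy] T by (simp add: power_divide)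
  have "(X \<longlongrightarrow> X T) (at_left T)"
    using X T by (rule continuous_on_Icc_at_leftD)
  then show ?thesis
    using sol dual_anchor_sol_unique[OF L T _ sol] rate by blast
qed

end
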